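(* Let $\mathcal X\subset\mathbb R^d$ be bounded with Lebesgue measure $1$, let $g:\mathcal X\to[g_{\min},g_{\max}]$ with $0<g_{\min}<g_{\max}<\infty$ and $\|g\|_{L^2(\mathcal X)}=1$, and let $w:[0,\infty)\to[0,\infty)$ be bounded, continuous, with unique minimiser $w(0)=0$ and $\|w\|_\infty\le W$ for some fixed $W<\infty$ independent of $D,N$. Let $\mathscr G(\theta)(x)=\sqrt{w(\|\theta\|_{\mathbb R^D})}\,g(x)$ and consider the regression model $Y_i=\mathscr G(\theta)(X_i)+\varepsilon_i$ at ground truth $\theta_0=0$ (so $Y_i=\varepsilon_i$), with $X_i$ i.i.d. uniform on $\mathcal X$, $\varepsilon_i$ i.i.d. $\mathcal N(0,1)$ independent, law $P_0^N$. Let $\Pi=\Pi_N$ be a sequence of prior probability measures on $\mathbb R^D$ and $\Pi(\cdot\mid Z^{(N)})$ the posterior $d\Pi(\theta\mid Z^{(N)})\propto e^{\ell_N(\theta)}d\Pi(\theta)$, $\ell_N(\theta)=-\frac12\sum_{i=1}^N|Y_i-\mathscr G(\theta)(X_i)|^2$. (i) Suppose that for some radii $0<s<\sigma$, constants $\varepsilon,\eta,\nu>0$ and all $N$ large enough, \[\frac1N\log\frac{\Pi(\Theta_{s,\eta})}{\Pi(\Theta_{\sigma,\varepsilon})}\le-2\nu-\frac{w_+(\sigma,\varepsilon)-w_-(s,\eta)}2.\] Then with $P_0^N$-probability tending to $1$ as $N\to\infty$, \[\frac{\Pi(\Theta_{s,\eta}\mid Z^{(N)})}{\Pi(\Theta_{\sigma,\varepsilon}\mid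 Z^{(N)})}\le e^{-\nu N}.\] (ii) If in addition $w$ is monotone increasing on $[0,\infty)$ and for some $L>1+\varepsilon$, $\frac1N\log\frac{\Pi(B_L^c)}{\Pi(\Theta_{\sigma,\varepsilon})}\le-2\nu$, then with $P_0^N$-probability tending to $1$, \[\frac{\Pi(B_L^c\mid Z^{(N)})}{\Pi(\Theta_{\sigma,\varepsilon}\mid Z^{(N)})}\le e^{-\nu N}.\]
   Context: $\Theta_{r,\epsilon}=\{\theta\in\mathbb R^D:\|\theta\|_{\mathbb R^D}\in(r,r+\epsilon)\}$, $B_L=\{\theta:\|\theta\|_{\mathbb R^D}\le L\}$. For $r\ge0,\epsilon>0$: $w_-(r,\epsilon)=\inf_{u\in(r,r+\epsilon)}w(u)$, $w_+(r,\epsilon)=\sup_{u\in(r,r+\epsilon)}w(u)$. *)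

theory Defs
  imports "HOL-Probability.Probability"
begin

text \<open>Parameter vectors in R^D are represented as functions nat => real whose
  coordinates i >= D are irrelevant (priors are required to put all mass on
  vectors vanishing outside the first D coordinates). This allows the dimension
  D = D_N to depend on N.\<close>

definition normD :: "nat \<Rightarrow> (nat \<Rightarrow> real) \<Rightarrow> real" where
  "normD D \<theta> = sqrt (\<Sum>i<D. (\<theta> i)\<^sup>2)"

definition Theta :: "nat \<Rightarrow> real \<Rightarrow> real \<Rightarrow> (nat \<Rightarrow> real) set" where
  "Theta D r e = {\<theta>. normD D \<theta> \<in> {r<..<r+e}}"

definition BallC :: "nat \<Rightarrow> real \<Rightarrow> (nat \<Rightarrow> real) set" where
  "BallC D L = {\<theta>. \<not> normD D \<theta> \<le> L}"

definition w_minus :: "(real \<Rightarrow> real) \<Rightarrow> real \<Rightarrow> real \<Rightarrow> real" where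
  "w_minus w r e = (INF u\<in>{r<..<r+e}. w u)"

definition w_plus :: "(real \<Rightarrow> real) \<Rightarrow> real \<Rightarrow> real \<Rightarrow> real" where
  "w_plus w r e = (SUP u\<in>{r<..<r+e}. w u)"

definition P0_single :: "'x::euclidean_space set \<Rightarrow> ('x \<times> real) measure" where
  "P0_single X = uniform_measure lborel X \<Otimes>\<^sub>M density lborel std_normal_density"

definition P0N :: "'x::euclidean_space set \<Rightarrow> nat \<Rightarrow> (nat \<Rightarrow> 'x \<times> real) measure" where
  "P0N X N = PiM {..<N} (\<lambda>_. P0_single X)"

definition loglik :: "(real \<Rightarrow> real) \<Rightarrow> ('x \<Rightarrow> real) \<Rightarrow> nat \<Rightarrow> nat
    \<Rightarrow> (nat \<Rightarrow> 'x \<times> real) \<Rightarrow> (nat \<Rightarrow> real) \<Rightarrow> real" where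
  "loglik w g D N z \<theta> =
     - (1/2) * (\<Sum>i<N. (snd (z i) - sqrt (w (normD D \<theta>)) * g (fst (z i)))\<^sup>2)"

definition posterior :: "(real \<Rightarrow> real) \<Rightarrow> ('x \<Rightarrow> real) \<Rightarrow> nat \<Rightarrow> nat
    \<Rightarrow> (nat \<Rightarrow> real) measure \<Rightarrow> (nat \<Rightarrow> 'x \<times> real) \<Rightarrow> (nat \<Rightarrow> real) set \<Rightarrow> real" where
  "posterior w g D N Pr z A =
     (LINT \<theta>:A|Pr. exp (loglik w g D N z \<theta>)) / (LINT \<theta>|Pr. exp (loglik w g D N z \<theta>))"

text \<open>"With P_0^N-probability tending to 1": the event contains measurable
  events whose probability tends to 1.\<close>
definition whp :: "(nat \<Rightarrow> 'a measure) \<Rightarrow> (nat \<Rightarrow> 'a \<Rightarrow> bool) \<Rightarrow> bool" where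
  "whp P Q = (\<exists>E. (\<forall>N. E N \<in> sets (P N) \<and> (\<forall>z\<in>E N. Q N z))
                 \<and> (\<lambda>N. measure (P N) (E N)) \<longlonglongrightarrow> 1)"

end

(*
  At theta_0 = 0 the log-likelihood depends on theta only through u = w(|theta|):
  ell_N(theta) = -1/2 sum_i Y_i^2 + sqrt u * S_N - u * Q_N / 2, where S_N = sum_i eps_i g(X_i) and
  Q_N = sum_i g(X_i)^2. By Chebyshev's inequality, |S_N| <= delta N and |Q_N - N| <= delta N with
  probability tending to one. On this event, if w >= lo on A and w <= hi on B, the ratio
  Pi(A | Z) / Pi(B | Z) is at most exp(2 sqrt W |S_N| + (hi - lo) Q_N / 2) Pi(A) / Pi(B), and the
  prior-mass hypothesis absorbs the term (hi - lo) N / 2 and leaves exp(-nu N) for small delta.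
  In (ii), monotonicity of w gives lo = hi = w(L).
*)
theory Submission
  imports Defs
begin

section \<open>Sums over independent samples\<close>

lemma (in prob_space) PiM_coordinate_integral:
  fixes f :: "'a \<Rightarrow> real"
  assumes "i \<in> I" and f[measurable]: "f \<in> borel_measurable M"
  shows "integrable (PiM I (\<lambda>_. M)) (\<lambda>z. f (z i)) \<longleftrightarrow> integrable M f"
    and "(\<integral>z. f (z i) \<partial>PiM I (\<lambda>_. M)) = integral\<^sup>L M f"
proof -
  have coordinate: "(\<lambda>z. z i) \<in> measurable (PiM I (\<lambda>_. M)) M"
    using \<open>i \<in> I\<close> by measurable
  have distr_coordinate: "distr (PiM I (\<lambda>_. M)) M (\<lambda>z. z i) = M"
    using \<open>i \<in> I\<close> by (intro distr_PiM_component) (simp add: prob_space_axioms)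
  show "integrable (PiM I (\<lambda>_. M)) (\<lambda>z. f (z i)) \<longleftrightarrow> integrable M f"
    using integrable_distr_eq[OF coordinate f] by (simp add: distr_coordinate)
  show "(\<integral>z. f (z i) \<partial>PiM I (\<lambda>_. M)) = integral\<^sup>L M f"
    using integral_distr[OF coordinate f] by (simp add: distr_coordinate)
qed

lemma (in prob_space) PiM_two_coordinates_integral:
  fixes a b :: "'a \<Rightarrow> real" and I :: "'i set"
  assumes "finite I" "i \<in> I" "j \<in> I" "i \<noteq> j" and "integrable M a" "integrable M b"
  shows "integrable (PiM I (\<lambda>_. M)) (\<lambda>z. a (z i) * b (z j))"
    and "(\<integral>z. a (z i) * b (z j) \<partial>PiM I (\<lambda>_. M)) = integral\<^sup>L M a * integral\<^sup>L M b"
proof -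
  have product: "product_sigma_finite (\<lambda>_::'i. M)"
    by (simp add: product_sigma_finite_def prob_space_imp_sigma_finite prob_space_axioms)
  define f where "f k = (if k = i then a else if k = j then b else (\<lambda>_. 1))" for k
  have f_int: "integrable M (f k)" for k
    using assms by (simp add: f_def)
  have prod_f: "(\<Prod>k\<in>I. f k (z k)) = a (z i) * b (z j)" for z
  proof -
    have "(\<Prod>k\<in>I. f k (z k)) = (\<Prod>k\<in>{i, j}. f k (z k))"
      using assms by (intro prod.mono_neutral_right) (auto simp: f_def)
    then show ?thesis
      using \<open>i \<noteq> j\<close> by (simp add: f_def)
  qed
  have "(\<Prod>k\<in>I. integral\<^sup>L M (f k)) = (\<Prod>k\<in>{i, j}. integral\<^sup>L M (f k))"
    using assms by (intro prod.mono_neutral_right) (auto simp: f_def prob_space)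
  then have prod_int: "(\<Prod>k\<in>I. integral\<^sup>L M (f k)) = integral\<^sup>L M a * integral\<^sup>L M b"
    using \<open>i \<noteq> j\<close> by (simp add: f_def)
  show "integrable (PiM I (\<lambda>_. M)) (\<lambda>z. a (z i) * b (z j))"
    using product_sigma_finite.product_integrable_prod[OF product \<open>finite I\<close>, of f] f_int
    by (simp add: prod_f)
  show "(\<integral>z. a (z i) * b (z j) \<partial>PiM I (\<lambda>_. M)) = integral\<^sup>L M a * integral\<^sup>L M b"
    using product_sigma_finite.product_integral_prod[OF product \<open>finite I\<close>, of f] f_int
    by (simp add: prod_f prod_int)
qed

lemma (in prob_space) PiM_integral_sum_square:
  fixes h :: "'a \<Rightarrow> real"
  assumes "finite I" and h[measurable]: "h \<in> borel_measurable M"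
    and h2: "integrable M (\<lambda>x. (h x)\<^sup>2)" and h_mean: "integral\<^sup>L M h = 0"
  shows "integrable (PiM I (\<lambda>_. M)) (\<lambda>z. (\<Sum>i\<in>I. h (z i))\<^sup>2)"
    and "(\<integral>z. (\<Sum>i\<in>I. h (z i))\<^sup>2 \<partial>PiM I (\<lambda>_. M)) = card I * integral\<^sup>L M (\<lambda>x. (h x)\<^sup>2)"
proof -
  let ?P = "PiM I (\<lambda>_. M)"
  have h_int: "integrable M h"
    using square_integrable_imp_integrable[OF h h2] .
  have diag: "integrable ?P (\<lambda>z. h (z i) * h (z i))"
    "(\<integral>z. h (z i) * h (z i) \<partial>?P) = integral\<^sup>L M (\<lambda>x. (h x)\<^sup>2)" if "i \<in> I" for i
    using PiM_coordinate_integral[OF that, of "\<lambda>x. (h x)\<^sup>2"] h2 by (simp_all add: power2_eq_square)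
  have cross: "integrable ?P (\<lambda>z. h (z i) * h (z j)) \<and>
      (\<integral>z. h (z i) * h (z j) \<partial>?P) = (if i = j then integral\<^sup>L M (\<lambda>x. (h x)\<^sup>2) else 0)"
    if "i \<in> I" "j \<in> I" for i j
  proof (cases "i = j")
    case True
    with diag[OF that(1)] show ?thesis by simp
  next
    case False
    with PiM_two_coordinates_integral[OF \<open>finite I\<close> that False h_int h_int] h_mean
    show ?thesis by simp
  qed
  have square: "(\<Sum>i\<in>I. h (z i))\<^sup>2 = (\<Sum>i\<in>I. \<Sum>j\<in>I. h (z i) * h (z j))" for z
    by (simp add: power2_eq_square sum_product)
  show "integrable ?P (\<lambda>z. (\<Sum>i\<in>I. h (z i))\<^sup>2)"
    unfolding square using cross by (intro Bochner_Integration.integrable_sum) blast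
  have "(\<integral>z. (\<Sum>i\<in>I. \<Sum>j\<in>I. h (z i) * h (z j)) \<partial>?P)
      = (\<Sum>i\<in>I. \<Sum>j\<in>I. if i = j then integral\<^sup>L M (\<lambda>x. (h x)\<^sup>2) else 0)"
    using cross by (simp add: Bochner_Integration.integral_sum Bochner_Integration.integrable_sum)
  then show "(\<integral>z. (\<Sum>i\<in>I. h (z i))\<^sup>2 \<partial>?P) = card I * integral\<^sup>L M (\<lambda>x. (h x)\<^sup>2)"
    using \<open>finite I\<close> by (simp add: square)
qed

lemma (in prob_space) PiM_sum_deviation_le:
  fixes h :: "'a \<Rightarrow> real"
  assumes "finite I" and h[measurable]: "h \<in> borel_measurable M"
    and h2: "integrable M (\<lambda>x. (h x)\<^sup>2)" and h_mean: "integral\<^sup>L M h = 0" and "c > 0"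
  shows "measure (PiM I (\<lambda>_. M)) {z \<in> space (PiM I (\<lambda>_. M)). c \<le> \<bar>\<Sum>i\<in>I. h (z i)\<bar>}
    \<le> card I * integral\<^sup>L M (\<lambda>x. (h x)\<^sup>2) / c\<^sup>2"
proof -
  interpret P: prob_space "PiM I (\<lambda>_. M)"
    by (intro prob_space_PiM prob_space_axioms)
  have h_int: "integrable M h"
    using square_integrable_imp_integrable[OF h h2] .
  have mean: "P.expectation (\<lambda>z. \<Sum>i\<in>I. h (z i)) = 0"
    using PiM_coordinate_integral[of _ I h] h_int h_mean
    by (simp add: Bochner_Integration.integral_sum)
  show ?thesis
    using P.Chebyshev_inequality[of "\<lambda>z. \<Sum>i\<in>I. h (z i)" c] \<open>c > 0\<close>
      PiM_integral_sum_square[OF \<open>finite I\<close> h h2 h_mean]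
    by (simp add: mean)
qed

section \<open>Events of probability tending to one\<close>

lemma whp_mono_eventually:
  assumes "whp P Q" and "eventually (\<lambda>N. \<forall>z. Q N z \<longrightarrow> R N z) sequentially"
  shows "whp P R"
proof -
  obtain E where E: "\<And>N. E N \<in> sets (P N)" "\<And>N z. z \<in> E N \<Longrightarrow> Q N z"
    and lim: "(\<lambda>N. measure (P N) (E N)) \<longlonglongrightarrow> 1"
    using assms(1) unfolding whp_def by blast
  obtain N0 where N0: "\<And>N z. N \<ge> N0 \<Longrightarrow> Q N z \<Longrightarrow> R N z"
    using assms(2) unfolding eventually_sequentially by blast
  define E' where "E' N = (if N \<ge> N0 then E N else {})" for N
  have "eventually (\<lambda>N. measure (P N) (E N) = measure (P N) (E' N)) sequentially"
    using eventually_ge_at_top[of N0] by eventually_elim (simp add: E'_def)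
  from lim this have "(\<lambda>N. measure (P N) (E' N)) \<longlonglongrightarrow> 1"
    by (rule Lim_transform_eventually)
  moreover have "\<forall>N. E' N \<in> sets (P N) \<and> (\<forall>z\<in>E' N. R N z)"
    using E N0 by (simp add: E'_def)
  ultimately show ?thesis
    unfolding whp_def by (intro exI[of _ E']) simp
qed

lemma whp_conj:
  assumes "\<And>N. prob_space (P N)" and "whp P Q1" and "whp P Q2"
  shows "whp P (\<lambda>N z. Q1 N z \<and> Q2 N z)"
proof -
  obtain E1 where E1: "\<And>N. E1 N \<in> sets (P N)" "\<And>N z. z \<in> E1 N \<Longrightarrow> Q1 N z"
    and lim1: "(\<lambda>N. measure (P N) (E1 N)) \<longlonglongrightarrow> 1"
    using assms(2) unfolding whp_def by blast
  obtain E2 where E2: "\<And>N. E2 N \<in> sets (P N)" "\<And>N z. z \<in> E2 N \<Longrightarrow> Q2 N z"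
    and lim2: "(\<lambda>N. measure (P N) (E2 N)) \<longlonglongrightarrow> 1"
    using assms(3) unfolding whp_def by blast
  have bounds: "measure (P N) (E1 N) + measure (P N) (E2 N) - 1 \<le> measure (P N) (E1 N \<inter> E2 N)"
    "measure (P N) (E1 N \<inter> E2 N) \<le> 1" for N
  proof -
    interpret prob_space "P N" by (rule assms(1))
    show "measure (P N) (E1 N \<inter> E2 N) \<le> 1" by (rule prob_le_1)
    have "measure (P N) (E1 N \<union> E2 N) \<le> 1" by (rule prob_le_1)
    then show "measure (P N) (E1 N) + measure (P N) (E2 N) - 1 \<le> measure (P N) (E1 N \<inter> E2 N)"
      using measure_Un3[of "E1 N" "P N" "E2 N"] E1(1) E2(1) by (simp add: fmeasurable_eq_sets)
  qed
  have lower: "(\<lambda>N. measure (P N) (E1 N) + measure (P N) (E2 N) - 1) \<longlonglongrightarrow> 1"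
    using tendsto_diff[OF tendsto_add[OF lim1 lim2] tendsto_const[of 1]] by simp
  have "(\<lambda>N. measure (P N) (E1 N \<inter> E2 N)) \<longlonglongrightarrow> 1"
    by (rule tendsto_sandwich[OF always_eventually always_eventually lower tendsto_const])
      (simp_all add: bounds)
  moreover have "\<forall>N. E1 N \<inter> E2 N \<in> sets (P N) \<and> (\<forall>z\<in>E1 N \<inter> E2 N. Q1 N z \<and> Q2 N z)"
    using E1 E2 by (simp add: sets.Int)
  ultimately show ?thesis
    unfolding whp_def by (intro exI[of _ "\<lambda>N. E1 N \<inter> E2 N"]) simp
qed

lemma (in prob_space) whp_sample_sum_le:
  fixes h :: "'a \<Rightarrow> real"
  assumes h[measurable]: "h \<in> borel_measurable M"
    and h2: "integrable M (\<lambda>x. (h x)\<^sup>2)" and h_mean: "integral\<^sup>L M h = 0" and "\<delta> > 0"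
  shows "whp (\<lambda>N. PiM {..<N} (\<lambda>_. M)) (\<lambda>N z. \<bar>\<Sum>i<N. h (z i)\<bar> \<le> \<delta> * real N)"
proof -
  define P where "P N = PiM {..<N} (\<lambda>_. M)" for N :: nat
  define B where "B N = {z \<in> space (P N). \<delta> * real N \<le> \<bar>\<Sum>i<N. h (z i)\<bar>}" for N
  define V where "V = integral\<^sup>L M (\<lambda>x. (h x)\<^sup>2) / \<delta>\<^sup>2"
  have B_sets: "B N \<in> sets (P N)" for N
    unfolding B_def P_def by measurable
  have P_prob: "prob_space (P N)" for N
    unfolding P_def by (intro prob_space_PiM prob_space_axioms)
  have B_le: "measure (P N) (B N) \<le> V / real N" if "N > 0" for N
  proof -
    have "measure (P N) (B N) \<le> real N * integral\<^sup>L M (\<lambda>x. (h x)\<^sup>2) / (\<delta> * real N)\<^sup>2"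
      using PiM_sum_deviation_le[of "{..<N}" h "\<delta> * real N"] h2 h_mean \<open>\<delta> > 0\<close> that
      by (simp add: B_def P_def)
    also have "\<dots> = V / real N"
      using that by (simp add: V_def power2_eq_square)
    finally show ?thesis .
  qed
  have B_lim: "(\<lambda>N. measure (P N) (B N)) \<longlonglongrightarrow> 0"
    by (rule tendsto_sandwich[OF always_eventually eventually_mono[OF eventually_gt_at_top[of 0]]
          tendsto_const lim_const_over_n[of V]]) (simp_all add: B_le)
  have "(\<lambda>N. measure (P N) (space (P N) - B N)) \<longlonglongrightarrow> 1"
    using tendsto_diff[OF tendsto_const[of 1] B_lim]
    by (simp add: prob_space.prob_compl[OF P_prob B_sets])
  moreover have "\<forall>N. space (P N) - B N \<in> sets (P N) \<and>
      (\<forall>z\<in>space (P N) - B N. \<bar>\<Sum>i<N. h (z i)\<bar> \<le> \<delta> * real N)"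
    using B_sets by (auto simp: B_def)
  ultimately show ?thesis
    unfolding whp_def P_def by (intro exI[of _ "\<lambda>N. space (P N) - B N"]) (simp add: P_def)
qed

section \<open>Design and noise\<close>

definition noise_term :: "('x \<Rightarrow> real) \<Rightarrow> nat \<Rightarrow> (nat \<Rightarrow> 'x \<times> real) \<Rightarrow> real" where
  "noise_term g N z = (\<Sum>i<N. snd (z i) * g (fst (z i)))"

definition design_term :: "('x \<Rightarrow> real) \<Rightarrow> nat \<Rightarrow> (nat \<Rightarrow> 'x \<times> real) \<Rightarrow> real" where
  "design_term g N z = (\<Sum>i<N. (g (fst (z i)))\<^sup>2)"

definition typical_sample :: "('x \<Rightarrow> real) \<Rightarrow> real \<Rightarrow> nat \<Rightarrow> (nat \<Rightarrow> 'x \<times> real) \<Rightarrow> bool" where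
  "typical_sample g \<delta> N z \<longleftrightarrow>
     \<bar>noise_term g N z\<bar> \<le> \<delta> * real N \<and> \<bar>design_term g N z - real N\<bar> \<le> \<delta> * real N"

lemma integral_pair_measure_mult:
  fixes a :: "'a \<Rightarrow> real" and b :: "'b \<Rightarrow> real"
  assumes "sigma_finite_measure M1" "sigma_finite_measure M2"
    and a: "integrable M1 a" and b: "integrable M2 b"
  shows "integrable (M1 \<Otimes>\<^sub>M M2) (\<lambda>z. a (fst z) * b (snd z))"
    and "(\<integral>z. a (fst z) * b (snd z) \<partial>(M1 \<Otimes>\<^sub>M M2)) = integral\<^sup>L M1 a * integral\<^sup>L M2 b"
proof -
  interpret pair_sigma_finite M1 M2
    using assms(1,2) by (simp add: pair_sigma_finite_def)
  have [measurable]: "a \<in> borel_measurable M1" "b \<in> borel_measurable M2"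
    using a b by auto
  show int: "integrable (M1 \<Otimes>\<^sub>M M2) (\<lambda>z. a (fst z) * b (snd z))"
  proof (rule Fubini_integrable)
    have "(\<lambda>x. \<integral>y. norm (a x * b y) \<partial>M2) = (\<lambda>x. \<bar>a x\<bar> * (\<integral>y. \<bar>b y\<bar> \<partial>M2))"
      by (simp add: abs_mult)
    then show "integrable M1 (\<lambda>x. \<integral>y. norm (a (fst (x, y)) * b (snd (x, y))) \<partial>M2)"
      using a by (simp add: integrable_mult_left integrable_abs)
  qed (use b in simp_all)
  show "(\<integral>z. a (fst z) * b (snd z) \<partial>(M1 \<Otimes>\<^sub>M M2)) = integral\<^sup>L M1 a * integral\<^sup>L M2 b"
    using integral_fst[of "\<lambda>x y. a x * b y"] int by (simp add: case_prod_beta')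
qed

lemma integrable_uniform_measure_bounded:
  fixes f :: "'a::euclidean_space \<Rightarrow> real"
  assumes "X \<in> sets lborel" "emeasure lborel X \<noteq> 0" "emeasure lborel X \<noteq> \<infinity>"
    and "f \<in> borel_measurable lborel" and "\<forall>x\<in>X. \<bar>f x\<bar> \<le> B"
  shows "integrable (uniform_measure lborel X) f"
proof -
  interpret prob_space "uniform_measure lborel X"
    using assms(2,3) by (rule prob_space_uniform_measure)
  have "AE x in uniform_measure lborel X. x \<in> X"
    using assms(1) by (intro AE_uniform_measureI) simp_all
  then have "AE x in uniform_measure lborel X. norm (f x) \<le> B"
    by eventually_elim (use assms(5) in simp)
  then show ?thesis
    using assms(4) by (intro integrable_const_bound[where B=B]) simp_all
qed

lemma std_normal_density_moments:
  shows "integrable (density lborel std_normal_density) (\<lambda>y. y)"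
    and "integrable (density lborel std_normal_density) (\<lambda>y. y\<^sup>2)"
    and "(\<integral>y. y \<partial>density lborel std_normal_density) = 0"
proof -
  show "integrable (density lborel std_normal_density) (\<lambda>y. y)"
    using integrable_std_normal_moment[of 1] by (subst integrable_density) simp_all
  show "integrable (density lborel std_normal_density) (\<lambda>y. y\<^sup>2)"
    using integrable_std_normal_moment[of 2] by (subst integrable_density) simp_all
  have "(\<integral>x. std_normal_density x * x ^ (2 * 0 + 1) \<partial>lborel) = 0"
    by (rule integral_std_normal_moment_odd)
  then show "(\<integral>y. y \<partial>density lborel std_normal_density) = 0"
    by (subst integral_density) (simp_all add: normal_density_nonneg)
qed

lemma uniform_measure_design_moments:
  fixes X :: "'x::euclidean_space set" and g :: "'x \<Rightarrow> real"
  assumes X_meas: "X \<in> sets lborel" and X_vol: "emeasure lborel X = 1"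
    and g_meas: "g \<in> borel_measurable lborel" and g_bdd: "\<forall>x\<in>X. \<bar>g x\<bar> \<le> G"
    and g_L2: "(LINT x:X|lborel. (g x)\<^sup>2) = 1"
  shows "integrable (uniform_measure lborel X) g"
    and "integrable (uniform_measure lborel X) (\<lambda>x. (g x)\<^sup>2)"
    and "integrable (uniform_measure lborel X) (\<lambda>x. ((g x)\<^sup>2 - 1)\<^sup>2)"
    and "(\<integral>x. (g x)\<^sup>2 \<partial>uniform_measure lborel X) = 1"
proof -
  have bounded_int: "integrable (uniform_measure lborel X) f"
    if "f \<in> borel_measurable lborel" "\<forall>x\<in>X. \<bar>f x\<bar> \<le> B" for f :: "'x \<Rightarrow> real" and B
    using X_meas X_vol that by (intro integrable_uniform_measure_bounded) simp_all
  have g_sq_bdd: "\<forall>x\<in>X. \<bar>(g x)\<^sup>2\<bar> \<le> G\<^sup>2"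
    using g_bdd power_mono[OF _ abs_ge_zero, of "g _" G 2] by simp
  show "integrable (uniform_measure lborel X) g"
    "integrable (uniform_measure lborel X) (\<lambda>x. (g x)\<^sup>2)"
    using bounded_int[OF g_meas g_bdd] bounded_int[OF _ g_sq_bdd] g_meas by simp_all
  have "\<forall>x\<in>X. \<bar>((g x)\<^sup>2 - 1)\<^sup>2\<bar> \<le> (G\<^sup>2 + 1)\<^sup>2"
  proof
    fix x assume "x \<in> X"
    then have "(g x)\<^sup>2 \<le> G\<^sup>2"
      using g_sq_bdd by simp
    then have "\<bar>(g x)\<^sup>2 - 1\<bar> \<le> G\<^sup>2 + 1"
      unfolding abs_le_iff using zero_le_power2[of "g x"] by linarith
    then show "\<bar>((g x)\<^sup>2 - 1)\<^sup>2\<bar> \<le> (G\<^sup>2 + 1)\<^sup>2"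
      by (metis abs_ge_zero abs_power2 power2_abs power_mono)
  qed
  then show "integrable (uniform_measure lborel X) (\<lambda>x. ((g x)\<^sup>2 - 1)\<^sup>2)"
    by (rule bounded_int[rotated]) (use g_meas in measurable)
  have "uniform_measure lborel X = density lborel (\<lambda>x. ennreal (indicator X x))"
    unfolding uniform_measure_def X_vol
    by (intro density_cong) (use X_meas in \<open>auto simp: indicator_def\<close>)
  then show "(\<integral>x. (g x)\<^sup>2 \<partial>uniform_measure lborel X) = 1"
    using g_meas X_meas g_L2 by (simp add: integral_density set_lebesgue_integral_def)
qed

lemma P0_single_moments:
  fixes X :: "'x::euclidean_space set" and g :: "'x \<Rightarrow> real"
  assumes X_meas: "X \<in> sets lborel" and X_vol: "emeasure lborel X = 1"
    and g_meas: "g \<in> borel_measurable lborel" and g_bdd: "\<forall>x\<in>X. \<bar>g x\<bar> \<le> G"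
    and g_L2: "(LINT x:X|lborel. (g x)\<^sup>2) = 1"
  shows "prob_space (P0_single X)"
    and "(\<lambda>p. snd p * g (fst p)) \<in> borel_measurable (P0_single X)"
    and "integrable (P0_single X) (\<lambda>p. (snd p * g (fst p))\<^sup>2)"
    and "(\<integral>p. snd p * g (fst p) \<partial>P0_single X) = 0"
    and "(\<lambda>p. (g (fst p))\<^sup>2 - 1) \<in> borel_measurable (P0_single X)"
    and "integrable (P0_single X) (\<lambda>p. ((g (fst p))\<^sup>2 - 1)\<^sup>2)"
    and "(\<integral>p. (g (fst p))\<^sup>2 - 1 \<partial>P0_single X) = 0"
proof -
  define U where "U = uniform_measure lborel X"
  define \<Phi> where "\<Phi> = density lborel std_normal_density"
  have P0: "P0_single X = U \<Otimes>\<^sub>M \<Phi>"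
    by (simp add: P0_single_def U_def \<Phi>_def)
  interpret U: prob_space U
    unfolding U_def using X_vol by (intro prob_space_uniform_measure) simp_all
  interpret \<Phi>: prob_space \<Phi>
    unfolding \<Phi>_def by (rule prob_space_normal_density) simp
  note U_moments = uniform_measure_design_moments[OF X_meas X_vol g_meas g_bdd g_L2, folded U_def]
  note \<Phi>_moments = std_normal_density_moments[folded \<Phi>_def]
  have [measurable]: "g \<in> borel_measurable U" "(\<lambda>y. y) \<in> borel_measurable \<Phi>"
    using g_meas by (simp_all add: U_def \<Phi>_def)
  note mult =
    integral_pair_measure_mult[OF U.sigma_finite_measure_axioms \<Phi>.sigma_finite_measure_axioms]
  show "prob_space (P0_single X)"
    unfolding P0 by (intro prob_space_pair U.prob_space_axioms \<Phi>.prob_space_axioms)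
  show "(\<lambda>p. snd p * g (fst p)) \<in> borel_measurable (P0_single X)"
    "(\<lambda>p. (g (fst p))\<^sup>2 - 1) \<in> borel_measurable (P0_single X)"
    unfolding P0 by measurable
  show "integrable (P0_single X) (\<lambda>p. (snd p * g (fst p))\<^sup>2)"
    using mult(1)[OF U_moments(2) \<Phi>_moments(2)]
    unfolding P0 by (simp add: power_mult_distrib mult.commute)
  show "(\<integral>p. snd p * g (fst p) \<partial>P0_single X) = 0"
    using mult(2)[OF U_moments(1) \<Phi>_moments(1)] \<Phi>_moments(3)
    unfolding P0 by (simp add: mult.commute)
  show "integrable (P0_single X) (\<lambda>p. ((g (fst p))\<^sup>2 - 1)\<^sup>2)"
    using mult(1)[OF U_moments(3) \<Phi>.integrable_const[of 1]] unfolding P0 by simp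
  show "(\<integral>p. (g (fst p))\<^sup>2 - 1 \<partial>P0_single X) = 0"
    using mult(2)[of "\<lambda>x. (g x)\<^sup>2 - 1", OF _ \<Phi>.integrable_const[of 1]] U_moments(2,4)
    unfolding P0 by (simp add: Bochner_Integration.integral_diff U.prob_space)
qed

lemma whp_typical_sample:
  fixes X :: "'x::euclidean_space set" and g :: "'x \<Rightarrow> real"
  assumes X_meas: "X \<in> sets lborel" and X_vol: "emeasure lborel X = 1"
    and g_meas: "g \<in> borel_measurable lborel" and g_bdd: "\<forall>x\<in>X. \<bar>g x\<bar> \<le> G"
    and g_L2: "(LINT x:X|lborel. (g x)\<^sup>2) = 1" and "\<delta> > 0"
  shows "whp (P0N X) (typical_sample g \<delta>)"
proof -
  note moments = P0_single_moments[OF X_meas X_vol g_meas g_bdd g_L2]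
  interpret prob_space "P0_single X"
    by (rule moments(1))
  have "design_term g N z - real N = (\<Sum>i<N. (g (fst (z i)))\<^sup>2 - 1)" for N z
    by (simp add: design_term_def sum_subtractf)
  then have "typical_sample g \<delta> = (\<lambda>N z. \<bar>\<Sum>i<N. snd (z i) * g (fst (z i))\<bar> \<le> \<delta> * real N
      \<and> \<bar>\<Sum>i<N. (g (fst (z i)))\<^sup>2 - 1\<bar> \<le> \<delta> * real N)"
    by (simp add: fun_eq_iff typical_sample_def noise_term_def)
  moreover have "P0N X = (\<lambda>N. PiM {..<N} (\<lambda>_. P0_single X))"
    by (simp add: P0N_def fun_eq_iff)
  ultimately show ?thesis
    using whp_conj[OF prob_space_PiM[OF moments(1)]
        whp_sample_sum_le[OF moments(2-4) \<open>\<delta> > 0\<close>] whp_sample_sum_le[OF moments(5-7) \<open>\<delta> > 0\<close>]]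
    by simp
qed

lemma typical_sample_noise_le:
  assumes "typical_sample g \<delta> N z" and "0 \<le> W" and "2 * sqrt W * \<delta> \<le> \<nu> / 2"
  shows "2 * sqrt W * \<bar>noise_term g N z\<bar> \<le> \<nu> * real N / 2"
proof -
  have "2 * sqrt W * \<bar>noise_term g N z\<bar> \<le> 2 * sqrt W * (\<delta> * real N)"
    using assms(1,2) unfolding typical_sample_def by (intro mult_left_mono) simp_all
  also have "\<dots> \<le> \<nu> / 2 * real N"
    using assms(3) by (simp add: mult.assoc[symmetric] mult_right_mono)
  finally show ?thesis
    by simp
qed

lemma typical_sample_design_le:
  assumes "typical_sample g \<delta> N z" and "\<bar>c\<bar> \<le> W" and "W * \<delta> \<le> \<nu>"
  shows "c * (design_term g N z - real N) \<le> \<nu> * real N"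
proof -
  have "c * (design_term g N z - real N) \<le> \<bar>c\<bar> * \<bar>design_term g N z - real N\<bar>"
    using abs_ge_self[of "c * (design_term g N z - real N)"] by (simp add: abs_mult)
  also have "\<dots> \<le> W * (\<delta> * real N)"
    using assms(1,2) unfolding typical_sample_def by (intro mult_mono) simp_all
  also have "\<dots> \<le> \<nu> * real N"
    using assms(2,3) by (simp add: mult.assoc[symmetric] mult_right_mono)
  finally show ?thesis .
qed

section \<open>The log-likelihood\<close>

lemma continuous_on_normD: "continuous_on UNIV (normD D)"
  unfolding normD_def[abs_def] by (intro continuous_intros continuous_on_product_coordinates)

lemma borel_measurable_normD[measurable]: "normD D \<in> borel_measurable borel"
  by (rule borel_measurable_continuous_onI[OF continuous_on_normD])

lemma normD_nonneg: "0 \<le> normD D \<theta>"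
  by (simp add: normD_def sum_nonneg)

lemma Theta_in_borel: "Theta D r e \<in> sets borel"
proof -
  have "Theta D r e = normD D -` {r<..<r+e}"
    by (auto simp: Theta_def)
  then show ?thesis
    using measurable_sets_borel[OF borel_measurable_normD] by simp
qed

lemma BallC_in_borel: "BallC D L \<in> sets borel"
proof -
  have "BallC D L = normD D -` {L<..}"
    by (auto simp: BallC_def)
  then show ?thesis
    using measurable_sets_borel[OF borel_measurable_normD] by simp
qed

lemma loglik_nonpos: "loglik w g D N z \<theta> \<le> 0"
  unfolding loglik_def by (simp add: sum_nonneg)

lemma loglik_expand:
  assumes "0 \<le> w (normD D \<theta>)"
  shows "loglik w g D N z \<theta> = - (1/2) * (\<Sum>i<N. (snd (z i))\<^sup>2)
     + sqrt (w (normD D \<theta>)) * noise_term g N z - w (normD D \<theta>) * design_term g N z / 2"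
proof -
  define t where "t = sqrt (w (normD D \<theta>))"
  have "(\<Sum>i<N. (snd (z i) - t * g (fst (z i)))\<^sup>2)
     = (\<Sum>i<N. (snd (z i))\<^sup>2) - 2 * t * noise_term g N z + t\<^sup>2 * design_term g N z"
    by (simp add: noise_term_def design_term_def power2_diff sum.distrib sum_subtractf
        sum_distrib_left algebra_simps power_mult_distrib)
  moreover have "t\<^sup>2 = w (normD D \<theta>)"
    using assms by (simp add: t_def)
  ultimately show ?thesis
    by (simp add: loglik_def t_def[symmetric] algebra_simps)
qed

lemma loglik_deviation_le:
  assumes "0 \<le> w (normD D \<theta>)" and "w (normD D \<theta>) \<le> W"
  shows "\<bar>loglik w g D N z \<theta> - (- (1/2) * (\<Sum>i<N. (snd (z i))\<^sup>2)
      - w (normD D \<theta>) * design_term g N z / 2)\<bar> \<le> sqrt W * \<bar>noise_term g N z\<bar>"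
proof -
  have "sqrt (w (normD D \<theta>)) * \<bar>noise_term g N z\<bar> \<le> sqrt W * \<bar>noise_term g N z\<bar>"
    using assms(2) by (intro mult_right_mono) simp_all
  then show ?thesis
    using loglik_expand[of w D \<theta> g N z] assms(1) by (simp add: abs_mult)
qed

lemma borel_measurable_loglik:
  assumes "continuous_on {0..} w"
  shows "loglik w g D N z \<in> borel_measurable borel"
proof -
  \<comment> \<open>\<open>w\<close> is only controlled on \<open>[0, \<infinity>)\<close>; composing with \<open>max 0\<close> makes it
    continuous on all of \<open>\<real>\<close>.\<close>
  define \<phi> where "\<phi> r = - (1/2) * (\<Sum>i<N. (snd (z i) - sqrt (w (max 0 r)) * g (fst (z i)))\<^sup>2)" for r
  have w_max: "continuous_on UNIV (\<lambda>r. w (max 0 r))"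
    by (rule continuous_on_compose2[OF assms, of UNIV "\<lambda>r. max 0 r"])
      (auto intro!: continuous_intros)
  have "continuous_on UNIV \<phi>"
    unfolding \<phi>_def
    by (intro continuous_intros continuous_on_compose2[OF continuous_on_real_sqrt w_max]) auto
  then have "(\<lambda>\<theta>. \<phi> (normD D \<theta>)) \<in> borel_measurable borel"
    by (rule borel_measurable_continuous_on) simp
  moreover have "(\<lambda>\<theta>. \<phi> (normD D \<theta>)) = loglik w g D N z"
    by (auto simp: \<phi>_def loglik_def normD_nonneg max_absorb2)
  ultimately show ?thesis
    by simp
qed

lemma integrable_exp_loglik:
  assumes "prob_space Pr" "sets Pr = sets borel" and "continuous_on {0..} w"
  shows "integrable Pr (\<lambda>\<theta>. exp (loglik w g D N z \<theta>))"
proof -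
  interpret prob_space Pr by fact
  show ?thesis
  proof (rule integrable_const_bound[where B=1])
    show "AE \<theta> in Pr. norm (exp (loglik w g D N z \<theta>)) \<le> 1"
      by (simp add: loglik_nonpos)
    show "(\<lambda>\<theta>. exp (loglik w g D N z \<theta>)) \<in> borel_measurable Pr"
      unfolding measurable_cong_sets[OF assms(2) refl]
      using borel_measurable_loglik[OF assms(3)] by measurable
  qed
qed

section \<open>Posterior ratios\<close>

lemma posterior_ratio_le_set_integral_ratio:
  "posterior w g D N Pr z A / posterior w g D N Pr z B
    \<le> (LINT \<theta>:A|Pr. exp (loglik w g D N z \<theta>)) / (LINT \<theta>:B|Pr. exp (loglik w g D N z \<theta>))"
proof (cases "(LINT \<theta>|Pr. exp (loglik w g D N z \<theta>)) = 0")
  case True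
  have "0 \<le> (LINT \<theta>:E|Pr. exp (loglik w g D N z \<theta>))" for E
    unfolding set_lebesgue_integral_def
    by (intro Bochner_Integration.integral_nonneg) (simp split: split_indicator)
  with True show ?thesis
    by (simp add: posterior_def)
qed (simp add: posterior_def)

lemma set_integral_ratio_le:
  fixes f :: "'a \<Rightarrow> real"
  assumes "finite_measure M" and f: "integrable M f" "\<And>x. 0 \<le> f x"
    and sets: "A \<in> sets M" "B \<in> sets M" "B' \<in> sets M" "B' \<subseteq> B"
    and upper: "\<And>x. x \<in> A \<Longrightarrow> f x \<le> a" and lower: "\<And>x. x \<in> B' \<Longrightarrow> b \<le> f x"
    and "0 \<le> a" "0 < b" "0 < measure M B'"
  shows "(LINT x:A|M. f x) / (LINT x:B|M. f x) \<le> a * measure M A / (b * measure M B')"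
proof -
  interpret finite_measure M by fact
  have indicator_int: "integrable M (\<lambda>x. indicator C x * c :: real)" if "C \<in> sets M" for C c
    using that by (simp add: less_top[symmetric])
  have "(LINT x:A|M. f x) \<le> (\<integral>x. indicator A x * a \<partial>M)"
    unfolding set_lebesgue_integral_def using sets(1) upper
    by (intro integral_mono integrable_mult_indicator f indicator_int) (auto split: split_indicator)
  then have int_A: "(LINT x:A|M. f x) \<le> a * measure M A"
    using sets(1) by (simp add: mult.commute)
  have "b * measure M B' = (\<integral>x. indicator B' x * b \<partial>M)"
    using sets(3) by (simp add: mult.commute)
  also have "\<dots> \<le> (LINT x:B|M. f x)"
    unfolding set_lebesgue_integral_def using sets lower f(2)
    by (intro integral_mono integrable_mult_indicator f indicator_int) (auto split: split_indicator)
  finally have int_B: "b * measure M B' \<le> (LINT x:B|M. f x)" .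
  have "0 \<le> (LINT x:A|M. f x)"
    unfolding set_lebesgue_integral_def using f(2)
    by (intro Bochner_Integration.integral_nonneg) (simp split: split_indicator)
  with int_A int_B show ?thesis
    using \<open>0 \<le> a\<close> \<open>0 < b\<close> \<open>0 < measure M B'\<close> by (intro frac_le) simp_all
qed

lemma posterior_ratio_le:
  fixes Pr :: "(nat \<Rightarrow> real) measure"
  assumes Pr: "prob_space Pr" "sets Pr = sets borel"
    and w_cont: "continuous_on {0..} w" and w_range: "\<forall>u\<ge>0. 0 \<le> w u \<and> w u \<le> W"
    and sets: "A \<in> sets borel" "B \<in> sets borel" "B' \<in> sets borel" "B' \<subseteq> B"
    and "measure Pr B' > 0"
    and lo: "\<And>\<theta>. \<theta> \<in> A \<Longrightarrow> lo \<le> w (normD D \<theta>)"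
    and hi: "\<And>\<theta>. \<theta> \<in> B' \<Longrightarrow> w (normD D \<theta>) \<le> hi"
  shows "posterior w g D N Pr z A / posterior w g D N Pr z B
    \<le> exp (2 * sqrt W * \<bar>noise_term g N z\<bar> + (hi - lo) * design_term g N z / 2)
      * (measure Pr A / measure Pr B')"
proof -
  interpret prob_space Pr by (rule Pr(1))
  define f where "f = (\<lambda>\<theta>. exp (loglik w g D N z \<theta>))"
  define C where "C = - (1/2) * (\<Sum>i<N. (snd (z i))\<^sup>2)"
  define S where "S = sqrt W * \<bar>noise_term g N z\<bar>"
  define Q where "Q = design_term g N z"
  define a where "a = exp (C + S - lo * Q / 2)"
  define b where "b = exp (C - S - hi * Q / 2)"
  have Q_nonneg: "0 \<le> Q"
    by (simp add: Q_def design_term_def sum_nonneg)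
  have deviation: "\<bar>loglik w g D N z \<theta> - (C - w (normD D \<theta>) * Q / 2)\<bar> \<le> S" for \<theta>
    unfolding C_def Q_def S_def using w_range normD_nonneg by (intro loglik_deviation_le) auto
  have f_upper: "f \<theta> \<le> a" if "\<theta> \<in> A" for \<theta>
    using deviation[of \<theta>] mult_right_mono[OF lo[OF that] Q_nonneg] by (simp add: f_def a_def)
  have f_lower: "b \<le> f \<theta>" if "\<theta> \<in> B'" for \<theta>
    using deviation[of \<theta>] mult_right_mono[OF hi[OF that] Q_nonneg] by (simp add: f_def b_def)
  have "posterior w g D N Pr z A / posterior w g D N Pr z B
      \<le> (LINT \<theta>:A|Pr. f \<theta>) / (LINT \<theta>:B|Pr. f \<theta>)"
    unfolding f_def by (rule posterior_ratio_le_set_integral_ratio)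
  also have "\<dots> \<le> a * measure Pr A / (b * measure Pr B')"
    using sets \<open>measure Pr B' > 0\<close> f_upper f_lower
    unfolding f_def using integrable_exp_loglik[OF Pr w_cont]
    by (intro set_integral_ratio_le finite_measure_axioms) (simp_all add: Pr(2) f_def a_def b_def)
  also have "\<dots> = (a / b) * (measure Pr A / measure Pr B')"
    by simp
  also have "a / b = exp ((C + S - lo * Q / 2) - (C - S - hi * Q / 2))"
    unfolding a_def b_def by (rule exp_diff[symmetric])
  also have "(C + S - lo * Q / 2) - (C - S - hi * Q / 2) = 2 * S + (hi - lo) * Q / 2"
    by (simp add: field_simps)
  finally show ?thesis
    by (simp add: S_def Q_def mult.assoc)
qed

lemma w_minus_le:
  assumes "\<forall>u\<ge>0. 0 \<le> w u" and "0 \<le> r" and "u \<in> {r<..<r+e}"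
  shows "w_minus w r e \<le> w u"
proof -
  have "bdd_below (w ` {r<..<r+e})"
    using assms(1,2) by (intro bdd_belowI2[where m=0]) auto
  then show ?thesis
    unfolding w_minus_def using assms(3) by (rule cINF_lower)
qed

lemma le_w_plus:
  assumes "\<forall>u\<ge>0. w u \<le> W" and "0 \<le> r" and "u \<in> {r<..<r+e}"
  shows "w u \<le> w_plus w r e"
proof -
  have "bdd_above (w ` {r<..<r+e})"
    using assms(1,2) by (intro bdd_aboveI2[where M=W]) auto
  then show ?thesis
    unfolding w_plus_def using assms(3) by (rule cSUP_upper[rotated])
qed

lemma w_minus_bounds:
  assumes "\<forall>u\<ge>0. 0 \<le> w u \<and> w u \<le> W" and "0 \<le> r" and "0 < e"
  shows "0 \<le> w_minus w r e \<and> w_minus w r e \<le> W"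
proof
  show "0 \<le> w_minus w r e"
    unfolding w_minus_def using assms by (intro cINF_greatest) auto
  have "w_minus w r e \<le> w (r + e/2)"
    using assms by (intro w_minus_le) auto
  also have "\<dots> \<le> W"
    using assms by simp
  finally show "w_minus w r e \<le> W" .
qed

lemma w_plus_bounds:
  assumes "\<forall>u\<ge>0. 0 \<le> w u \<and> w u \<le> W" and "0 \<le> r" and "0 < e"
  shows "0 \<le> w_plus w r e \<and> w_plus w r e \<le> W"
proof
  show "w_plus w r e \<le> W"
    unfolding w_plus_def using assms by (intro cSUP_least) auto
  have "0 \<le> w (r + e/2)"
    using assms by simp
  also have "\<dots> \<le> w_plus w r e"
    using assms by (intro le_w_plus) auto
  finally show "0 \<le> w_plus w r e" .
qed

lemma ratio_le_exp_if_ln_le: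
  fixes a b K :: real and N :: nat
  assumes "0 \<le> a" "0 < b" "0 < N" and "a = 0 \<or> ln (a / b) / real N \<le> K"
  shows "a / b \<le> exp (real N * K)"
proof (cases "a = 0")
  case False
  with assms have "ln (a / b) \<le> real N * K"
    by (simp add: divide_le_eq mult.commute)
  moreover have "0 < a / b"
    using False assms(1,2) by simp
  ultimately show ?thesis
    by (metis exp_le_cancel_iff exp_ln)
qed simp

lemma posterior_ratio_annuli_le:
  fixes Pr :: "(nat \<Rightarrow> real) measure"
  assumes Pr: "prob_space Pr" "sets Pr = sets borel"
    and w_cont: "continuous_on {0..} w" and w_range: "\<forall>u\<ge>0. 0 \<le> w u \<and> w u \<le> W"
    and radii: "0 \<le> s" "0 \<le> \<sigma>" "0 < \<epsilon>" "0 < \<eta>"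
    and "measure Pr (Theta D \<sigma> \<epsilon>) > 0"
    and prior_ratio: "measure Pr (Theta D s \<eta>) / measure Pr (Theta D \<sigma> \<epsilon>)
      \<le> exp (real N * (- 2 * \<nu> - (w_plus w \<sigma> \<epsilon> - w_minus w s \<eta>) / 2))"
    and typical: "typical_sample g \<delta> N z" and \<delta>: "2 * sqrt W * \<delta> \<le> \<nu> / 2" "W * \<delta> \<le> \<nu>"
  shows "posterior w g D N Pr z (Theta D s \<eta>) / posterior w g D N Pr z (Theta D \<sigma> \<epsilon>)
    \<le> exp (- \<nu> * real N)"
proof -
  define wm where "wm = w_minus w s \<eta>"
  define wp where "wp = w_plus w \<sigma> \<epsilon>"
  define S where "S = noise_term g N z"
  define Q where "Q = design_term g N z"
  have lo: "wm \<le> w (normD D \<theta>)" if "\<theta> \<in> Theta D s \<eta>" for \<theta>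
    unfolding wm_def using w_range radii that by (intro w_minus_le) (auto simp: Theta_def)
  have hi: "w (normD D \<theta>) \<le> wp" if "\<theta> \<in> Theta D \<sigma> \<epsilon>" for \<theta>
    unfolding wp_def using w_range radii that by (intro le_w_plus) (auto simp: Theta_def)
  have "\<bar>wp - wm\<bar> \<le> W"
    using w_minus_bounds[OF w_range radii(1,4)] w_plus_bounds[OF w_range radii(2,3)]
    unfolding wm_def wp_def by (simp add: abs_le_iff)
  then have exponent: "2 * sqrt W * \<bar>S\<bar> + (wp - wm) * (Q - real N) / 2 \<le> \<nu> * real N"
    using typical_sample_noise_le[OF typical _ \<delta>(1)] typical_sample_design_le[OF typical _ \<delta>(2)]
    unfolding S_def Q_def by fastforce
  have "posterior w g D N Pr z (Theta D s \<eta>) / posterior w g D N Pr z (Theta D \<sigma> \<epsilon>)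
      \<le> exp (2 * sqrt W * \<bar>S\<bar> + (wp - wm) * Q / 2)
        * (measure Pr (Theta D s \<eta>) / measure Pr (Theta D \<sigma> \<epsilon>))"
    unfolding S_def Q_def
    by (rule posterior_ratio_le[OF Pr w_cont w_range Theta_in_borel Theta_in_borel Theta_in_borel
          order_refl \<open>measure Pr (Theta D \<sigma> \<epsilon>) > 0\<close> lo hi])
  also have "\<dots> \<le> exp (2 * sqrt W * \<bar>S\<bar> + (wp - wm) * Q / 2)
        * exp (real N * (- 2 * \<nu> - (wp - wm) / 2))"
    using prior_ratio unfolding wm_def wp_def by (intro mult_left_mono) simp_all
  also have "\<dots> = exp (2 * sqrt W * \<bar>S\<bar> + (wp - wm) * Q / 2 + real N * (- 2 * \<nu> - (wp - wm) / 2))"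
    by (rule exp_add[symmetric])
  also have "2 * sqrt W * \<bar>S\<bar> + (wp - wm) * Q / 2 + real N * (- 2 * \<nu> - (wp - wm) / 2)
      = (2 * sqrt W * \<bar>S\<bar> + (wp - wm) * (Q - real N) / 2) - 2 * \<nu> * real N"
    by (simp add: field_simps)
  also have "exp (2 * sqrt W * \<bar>S\<bar> + (wp - wm) * (Q - real N) / 2 - 2 * \<nu> * real N)
      \<le> exp (- \<nu> * real N)"
    using exponent by simp
  finally show ?thesis .
qed

lemma (in finite_measure) measure_ratio_Diff_le:
  assumes "A \<in> sets M" "B \<in> sets M" and "0 < measure M B" and "measure M A \<le> measure M B / 2"
  shows "0 < measure M (B - A)"
    and "measure M A / measure M (B - A) \<le> 2 * (measure M A / measure M B)"
proof -
  have B_minus_A: "measure M B / 2 \<le> measure M (B - A)"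
    using finite_measure_Diff'[OF assms(2,1)] finite_measure_mono[OF Int_lower2 assms(1), of B]
      assms(4) by linarith
  with assms(3) show "0 < measure M (B - A)"
    by linarith
  have "measure M A / measure M (B - A) \<le> measure M A / (measure M B / 2)"
    using B_minus_A assms(3) by (intro divide_left_mono) simp_all
  also have "\<dots> = 2 * (measure M A / measure M B)"
    by (simp add: field_simps)
  finally show "measure M A / measure M (B - A) \<le> 2 * (measure M A / measure M B)" .
qed

lemma posterior_ratio_ball_complement_le:
  fixes Pr :: "(nat \<Rightarrow> real) measure"
  assumes Pr: "prob_space Pr" "sets Pr = sets borel"
    and w_cont: "continuous_on {0..} w" and w_range: "\<forall>u\<ge>0. 0 \<le> w u \<and> w u \<le> W"
    and w_mono: "mono_on {0..} w" and "0 \<le> L"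
    and B_pos: "measure Pr (Theta D \<sigma> \<epsilon>) > 0"
    and prior_ratio: "measure Pr (BallC D L) / measure Pr (Theta D \<sigma> \<epsilon>) \<le> exp (real N * (- 2 * \<nu>))"
    and N_large: "2 \<le> \<nu> * real N"
    and typical: "typical_sample g \<delta> N z" and \<delta>: "2 * sqrt W * \<delta> \<le> \<nu> / 2"
  shows "posterior w g D N Pr z (BallC D L) / posterior w g D N Pr z (Theta D \<sigma> \<epsilon>)
    \<le> exp (- \<nu> * real N)"
proof -
  interpret prob_space Pr by (rule Pr(1))
  define A where "A = BallC D L"
  define B where "B = Theta D \<sigma> \<epsilon>"
  define e where "e = exp (\<nu> * real N / 2)"
  have W_nonneg: "0 \<le> W"
    using w_range[rule_format, of 0] by simp
  have A_sets: "A \<in> sets Pr" and B_sets: "B \<in> sets Pr"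
    unfolding A_def B_def Pr(2) by (rule BallC_in_borel Theta_in_borel)+
  have e_ge_2: "2 \<le> e"
    using exp_ge_add_one_self[of "\<nu> * real N / 2"] N_large unfolding e_def by linarith
  have exp_nu: "exp (- \<nu> * real N) = 1 / (e * e)"
    unfolding e_def by (simp add: mult_exp_exp exp_minus inverse_eq_divide)
  have exp_2nu: "exp (real N * (- 2 * \<nu>)) = 1 / (e * e) * (1 / (e * e))"
    unfolding e_def by (simp add: mult_exp_exp exp_minus field_simps)
  have "2 \<le> exp (2 * \<nu> * real N)"
    using exp_ge_add_one_self[of "2 * \<nu> * real N"] N_large by linarith
  then have exp_2nu_half: "exp (real N * (- 2 * \<nu>)) \<le> 1 / 2"
    by (simp add: exp_minus field_simps)
  have "measure Pr A \<le> exp (real N * (- 2 * \<nu>)) * measure Pr B"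
    using prior_ratio B_pos unfolding A_def B_def by (simp add: divide_le_eq)
  also have "\<dots> \<le> 1 / 2 * measure Pr B"
    using exp_2nu_half by (rule mult_right_mono) simp
  finally have "measure Pr A \<le> measure Pr B / 2"
    by simp
  \<comment> \<open>Part of \<open>B\<close> may lie outside \<open>B\<^sub>L\<close>; discarding it costs at most a factor \<open>2\<close>.\<close>
  note Diff = measure_ratio_Diff_le[OF A_sets B_sets B_pos[folded B_def] this]
  have lo: "w L \<le> w (normD D \<theta>)" if "\<theta> \<in> A" for \<theta>
    using that \<open>0 \<le> L\<close> by (intro mono_onD[OF w_mono]) (auto simp: A_def BallC_def)
  have hi: "w (normD D \<theta>) \<le> w L" if "\<theta> \<in> B - A" for \<theta>
    using that \<open>0 \<le> L\<close> normD_nonneg by (intro mono_onD[OF w_mono]) (auto simp: A_def BallC_def)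
  have "posterior w g D N Pr z A / posterior w g D N Pr z B
      \<le> exp (2 * sqrt W * \<bar>noise_term g N z\<bar> + (w L - w L) * design_term g N z / 2)
        * (measure Pr A / measure Pr (B - A))"
    using Diff(1) A_sets B_sets
    by (intro posterior_ratio_le[OF Pr w_cont w_range _ _ _ Diff_subset _ lo hi])
      (simp_all add: A_def B_def Pr(2))
  also have "\<dots> \<le> e * (2 * exp (real N * (- 2 * \<nu>)))"
  proof (rule mult_mono)
    show "exp (2 * sqrt W * \<bar>noise_term g N z\<bar> + (w L - w L) * design_term g N z / 2) \<le> e"
      using typical_sample_noise_le[OF typical W_nonneg \<delta>] unfolding e_def by simp
    show "measure Pr A / measure Pr (B - A) \<le> 2 * exp (real N * (- 2 * \<nu>))"
      using Diff(2) prior_ratio unfolding A_def B_def by linarith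
  qed (simp_all add: e_def)
  also have "\<dots> = 2 / e * (1 / (e * e))"
    unfolding exp_2nu by (simp add: field_simps)
  also have "\<dots> \<le> exp (- \<nu> * real N)"
    unfolding exp_nu using e_ge_2 mult_right_mono[of "2 / e" 1 "1 / (e * e)"] by simp
  finally show ?thesis
    unfolding A_def B_def .
qed

lemma whp_posterior_ratio_annuli_le:
  fixes Pr :: "nat \<Rightarrow> (nat \<Rightarrow> real) measure"
  assumes prior: "\<forall>N. prob_space (Pr N) \<and> sets (Pr N) = sets borel"
    and w_cont: "continuous_on {0..} w" and w_range: "\<forall>u\<ge>0. 0 \<le> w u \<and> w u \<le> W"
    and radii: "0 \<le> s" "0 \<le> \<sigma>" "0 < \<epsilon>" "0 < \<eta>"
    and prior_mass: "eventually (\<lambda>N. measure (Pr N) (Theta (D N) \<sigma> \<epsilon>) > 0 \<and>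
        (measure (Pr N) (Theta (D N) s \<eta>) = 0 \<or>
         ln (measure (Pr N) (Theta (D N) s \<eta>) / measure (Pr N) (Theta (D N) \<sigma> \<epsilon>)) / real N
           \<le> - 2 * \<nu> - (w_plus w \<sigma> \<epsilon> - w_minus w s \<eta>) / 2)) sequentially"
    and typical: "whp P (typical_sample g \<delta>)" and \<delta>: "2 * sqrt W * \<delta> \<le> \<nu> / 2" "W * \<delta> \<le> \<nu>"
  shows "whp P (\<lambda>N z. posterior w g (D N) N (Pr N) z (Theta (D N) s \<eta>)
    / posterior w g (D N) N (Pr N) z (Theta (D N) \<sigma> \<epsilon>) \<le> exp (- \<nu> * real N))"
  using typical
proof (rule whp_mono_eventually)
  have Pr: "prob_space (Pr N)" "sets (Pr N) = sets borel" for N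
    using prior by auto
  show "eventually (\<lambda>N. \<forall>z. typical_sample g \<delta> N z \<longrightarrow>
      posterior w g (D N) N (Pr N) z (Theta (D N) s \<eta>)
        / posterior w g (D N) N (Pr N) z (Theta (D N) \<sigma> \<epsilon>) \<le> exp (- \<nu> * real N)) sequentially"
    using prior_mass eventually_gt_at_top[of 0]
  proof eventually_elim
    case (elim N)
    then show ?case
      using radii \<delta>
      by (intro allI impI posterior_ratio_annuli_le[OF Pr w_cont w_range] ratio_le_exp_if_ln_le)
        auto
  qed
qed

lemma whp_posterior_ratio_ball_complement_le:
  fixes Pr :: "nat \<Rightarrow> (nat \<Rightarrow> real) measure"
  assumes prior: "\<forall>N. prob_space (Pr N) \<and> sets (Pr N) = sets borel"
    and w_cont: "continuous_on {0..} w" and w_range: "\<forall>u\<ge>0. 0 \<le> w u \<and> w u \<le> W"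
    and w_mono: "mono_on {0..} w" and "0 \<le> L" and "0 < \<nu>"
    and prior_mass: "eventually (\<lambda>N. measure (Pr N) (Theta (D N) \<sigma> \<epsilon>) > 0 \<and>
        (measure (Pr N) (BallC (D N) L) = 0 \<or>
         ln (measure (Pr N) (BallC (D N) L) / measure (Pr N) (Theta (D N) \<sigma> \<epsilon>)) / real N
           \<le> - 2 * \<nu>)) sequentially"
    and typical: "whp P (typical_sample g \<delta>)" and \<delta>: "2 * sqrt W * \<delta> \<le> \<nu> / 2"
  shows "whp P (\<lambda>N z. posterior w g (D N) N (Pr N) z (BallC (D N) L)
    / posterior w g (D N) N (Pr N) z (Theta (D N) \<sigma> \<epsilon>) \<le> exp (- \<nu> * real N))"
  using typical
proof (rule whp_mono_eventually)
  have Pr: "prob_space (Pr N)" "sets (Pr N) = sets borel" for N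
    using prior by auto
  have "filterlim (\<lambda>N. \<nu> * real N) at_top sequentially"
    using \<open>0 < \<nu>\<close>
    by (intro filterlim_tendsto_pos_mult_at_top[OF tendsto_const] filterlim_real_sequentially)
  then have N_large: "eventually (\<lambda>N. 2 \<le> \<nu> * real N) sequentially"
    unfolding filterlim_at_top by blast
  show "eventually (\<lambda>N. \<forall>z. typical_sample g \<delta> N z \<longrightarrow>
      posterior w g (D N) N (Pr N) z (BallC (D N) L)
        / posterior w g (D N) N (Pr N) z (Theta (D N) \<sigma> \<epsilon>) \<le> exp (- \<nu> * real N)) sequentially"
    using prior_mass N_large eventually_gt_at_top[of 0]
  proof eventually_elim
    case (elim N)
    then show ?case
      using \<open>0 \<le> L\<close> \<delta>
      by (intro allI impI posterior_ratio_ball_complement_le[OF Pr w_cont w_range w_mono]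
          ratio_le_exp_if_ln_le) auto
  qed
qed

lemma small_tolerance_exists:
  fixes W \<nu> :: real
  assumes "0 \<le> W" and "0 < \<nu>"
  obtains \<delta> where "0 < \<delta>" "2 * sqrt W * \<delta> \<le> \<nu> / 2" "W * \<delta> \<le> \<nu>"
proof
  define \<delta> where "\<delta> = \<nu> / (4 * (sqrt W + W + 1))"
  have scale_pos: "0 < sqrt W + W + 1"
    using assms(1) by (simp add: add_nonneg_pos)
  then have scale: "(sqrt W + W + 1) * \<delta> = \<nu> / 4"
    unfolding \<delta>_def by (simp add: field_simps)
  show \<delta>_pos: "0 < \<delta>"
    unfolding \<delta>_def using scale_pos assms(2) by simp
  have "sqrt W * \<delta> \<le> (sqrt W + W + 1) * \<delta>" "W * \<delta> \<le> (sqrt W + W + 1) * \<delta>"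
    using assms(1) \<delta>_pos by (intro mult_right_mono; simp)+
  then show "2 * sqrt W * \<delta> \<le> \<nu> / 2" "W * \<delta> \<le> \<nu>"
    using scale assms(2) by simp_all
qed

theorem proposition4p2:
  fixes X :: "'x::euclidean_space set"
    and g :: "'x \<Rightarrow> real" and gmin gmax :: real
    and w :: "real \<Rightarrow> real" and W :: real
    and D :: "nat \<Rightarrow> nat"
    and Pr :: "nat \<Rightarrow> (nat \<Rightarrow> real) measure"
    and s \<sigma> \<epsilon> \<eta> \<nu> :: real
  assumes X_meas: "X \<in> sets lborel" and X_bdd: "bounded X" and X_vol: "emeasure lborel X = 1"
    and g_meas: "g \<in> borel_measurable lborel"
    and g_range: "\<forall>x\<in>X. gmin \<le> g x \<and> g x \<le> gmax"
    and g_consts: "0 < gmin" "gmin < gmax"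
    and g_L2: "(LINT x:X|lborel. (g x)\<^sup>2) = 1"
    and w_cont: "continuous_on {0..} w"
    and w_range: "\<forall>u\<ge>0. 0 \<le> w u \<and> w u \<le> W"
    and w_zero: "w 0 = 0" and w_unique_min: "\<forall>u>0. w u > 0"
    and prior: "\<forall>N. prob_space (Pr N) \<and> sets (Pr N) = sets borel"
    and prior_dim: "\<forall>N. AE \<theta> in Pr N. \<forall>i\<ge>D N. \<theta> i = 0"
    and radii: "0 < s" "s < \<sigma>"
    and params_pos: "\<epsilon> > 0" "\<eta> > 0" "\<nu> > 0"
    and hyp_i: "eventually (\<lambda>N. measure (Pr N) (Theta (D N) \<sigma> \<epsilon>) > 0 \<and>
        (measure (Pr N) (Theta (D N) s \<eta>) = 0 \<or>
         ln (measure (Pr N) (Theta (D N) s \<eta>) / measure (Pr N) (Theta (D N) \<sigma> \<epsilon>)) / real N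
           \<le> - 2 * \<nu> - (w_plus w \<sigma> \<epsilon> - w_minus w s \<eta>) / 2)) sequentially"
  shows
    "whp (P0N X) (\<lambda>N z. posterior w g (D N) N (Pr N) z (Theta (D N) s \<eta>)
         / posterior w g (D N) N (Pr N) z (Theta (D N) \<sigma> \<epsilon>) \<le> exp (- \<nu> * real N))
     \<and> (mono_on {0..} w \<longrightarrow>
        (\<forall>L. L > 1 + \<epsilon> \<and>
           eventually (\<lambda>N. measure (Pr N) (Theta (D N) \<sigma> \<epsilon>) > 0 \<and>
             (measure (Pr N) (BallC (D N) L) = 0 \<or>
              ln (measure (Pr N) (BallC (D N) L) / measure (Pr N) (Theta (D N) \<sigma> \<epsilon>)) / real N
                \<le> - 2 * \<nu>)) sequentially
         \<longrightarrow> whp (P0N X) (\<lambda>N z. posterior w g (D N) N (Pr N) z (BallC (D N) L)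
               / posterior w g (D N) N (Pr N) z (Theta (D N) \<sigma> \<epsilon>) \<le> exp (- \<nu> * real N))))"
proof -
  have "0 \<le> W"
    using w_range[rule_format, of 0] by simp
  then obtain \<delta> where \<delta>: "0 < \<delta>" "2 * sqrt W * \<delta> \<le> \<nu> / 2" "W * \<delta> \<le> \<nu>"
    using params_pos(3) by (rule small_tolerance_exists)
  have "\<forall>x\<in>X. \<bar>g x\<bar> \<le> \<bar>gmin\<bar> + \<bar>gmax\<bar>"
    using g_range by force
  then have typical: "whp (P0N X) (typical_sample g \<delta>)"
    by (rule whp_typical_sample[OF X_meas X_vol g_meas _ g_L2 \<delta>(1)])
  have "0 \<le> s" "0 \<le> \<sigma>"
    using radii by simp_all
  then have part_i: "whp (P0N X) (\<lambda>N z. posterior w g (D N) N (Pr N) z (Theta (D N) s \<eta>)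
      / posterior w g (D N) N (Pr N) z (Theta (D N) \<sigma> \<epsilon>) \<le> exp (- \<nu> * real N))"
    using params_pos(1,2)
    by (intro whp_posterior_ratio_annuli_le[OF prior w_cont w_range _ _ _ _ hyp_i typical \<delta>(2,3)])
  have part_ii: "whp (P0N X) (\<lambda>N z. posterior w g (D N) N (Pr N) z (BallC (D N) L)
      / posterior w g (D N) N (Pr N) z (Theta (D N) \<sigma> \<epsilon>) \<le> exp (- \<nu> * real N))"
    if "mono_on {0..} w" "L > 1 + \<epsilon>"
      and "eventually (\<lambda>N. measure (Pr N) (Theta (D N) \<sigma> \<epsilon>) > 0 \<and>
        (measure (Pr N) (BallC (D N) L) = 0 \<or>
         ln (measure (Pr N) (BallC (D N) L) / measure (Pr N) (Theta (D N) \<sigma> \<epsilon>)) / real N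
           \<le> - 2 * \<nu>)) sequentially" for L
    using that params_pos
    by (intro whp_posterior_ratio_ball_complement_le[OF prior w_cont w_range _ _ _ _ typical \<delta>(2)])
      auto
  show ?thesis
    using part_i part_ii by blast
qed

end
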